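(* Let $G$ and $H$ be connected graphs. If $H$ is an immersion of $G$, then $L(H)$ is a minor of $L(G)$.
   Context: All graphs are finite and loopless but may have parallel edges. For a graph $H$, the line graph $L(H)$ is the simple graph with vertex set $E(H)$ in which two distinct edges of $H$ are adjacent if and only if they share an end. Lifting a pair of adjacent edges $uv,vw$ means deleting them and adding a new edge $uw$ (if $u=w$ the loop is deleted). $H$ is an immersion of $G$ if a graph isomorphic to $H$ can be obtained from a subgraph of $G$ by repeatedly lifting pairs of edges. A graph $J$ is a minor of $G$ if a graph isomorphic to $J$ can be obtained from a subgraph of $G$ by contracting edges. *)

theory Defs
  imports Main
begin

text \<open>A multigraph has a vertex set, an edge set (edges have identities, so
parallel edges are allowed) and an incidence map giving the set of ends of
each edge.\<close>

record ('v, 'e) mgraph =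
  verts :: "'v set"
  edges :: "'e set"
  ends  :: "'e \<Rightarrow> 'v set"

definition mgraph :: "('v, 'e) mgraph \<Rightarrow> bool" where
  "mgraph G \<longleftrightarrow> finite (verts G) \<and> finite (edges G) \<and>
     (\<forall>e\<in>edges G. ends G e \<subseteq> verts G \<and> card (ends G e) = 2)"

definition madj :: "('v, 'e) mgraph \<Rightarrow> 'v \<Rightarrow> 'v \<Rightarrow> bool" where
  "madj G x y \<longleftrightarrow> (\<exists>e\<in>edges G. ends G e = {x, y})"

definition mconnected :: "('v, 'e) mgraph \<Rightarrow> bool" where
  "mconnected G \<longleftrightarrow> verts G \<noteq> {} \<and>
     (\<forall>x\<in>verts G. \<forall>y\<in>verts G. (madj G)\<^sup>*\<^sup>* x y)"

definition msubgraph :: "('v, 'e) mgraph \<Rightarrow> ('v, 'e) mgraph \<Rightarrow> bool" where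
  "msubgraph S G \<longleftrightarrow> verts S \<subseteq> verts G \<and> edges S \<subseteq> edges G \<and>
     (\<forall>e\<in>edges S. ends S e = ends G e \<and> ends G e \<subseteq> verts S)"

text \<open>The new edge reuses the name e1; this is
harmless since immersion is only defined up to isomorphism.\<close>

definition lift_step :: "('v, 'e) mgraph \<Rightarrow> ('v, 'e) mgraph \<Rightarrow> bool" where
  "lift_step G G' \<longleftrightarrow> (\<exists>e1 e2 u v w.
     e1 \<in> edges G \<and> e2 \<in> edges G \<and> e1 \<noteq> e2 \<and>
     ends G e1 = {u, v} \<and> ends G e2 = {v, w} \<and> u \<noteq> v \<and> v \<noteq> w \<and>
     (if u = w
      then G' = G\<lparr>edges := edges G - {e1, e2}\<rparr>
      else G' = G\<lparr>edges := edges G - {e2}, ends := (ends G)(e1 := {u, w})\<rparr>))"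

definition miso :: "('v, 'e) mgraph \<Rightarrow> ('w, 'f) mgraph \<Rightarrow> bool" where
  "miso H G \<longleftrightarrow> (\<exists>f g. bij_betw f (verts H) (verts G) \<and> bij_betw g (edges H) (edges G) \<and>
     (\<forall>e\<in>edges H. ends G (g e) = f ` ends H e))"

definition immersion :: "('w, 'f) mgraph \<Rightarrow> ('v, 'e) mgraph \<Rightarrow> bool" where
  "immersion H G \<longleftrightarrow> (\<exists>S G'. msubgraph S G \<and> lift_step\<^sup>*\<^sup>* S G' \<and> miso H G')"

record 'v sgraph =
  sverts :: "'v set"
  sedges :: "'v set set"

definition line_graph :: "('v, 'e) mgraph \<Rightarrow> 'e sgraph" where
  "line_graph H = \<lparr>sverts = edges H,
     sedges = {{e, f} | e f. e \<in> edges H \<and> f \<in> edges H \<and> e \<noteq> f \<and>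
                             ends H e \<inter> ends H f \<noteq> {}}\<rparr>"

definition ssubgraph :: "'v sgraph \<Rightarrow> 'v sgraph \<Rightarrow> bool" where
  "ssubgraph S G \<longleftrightarrow> sverts S \<subseteq> sverts G \<and> sedges S \<subseteq> sedges G \<and>
     (\<forall>e\<in>sedges S. e \<subseteq> sverts S)"

definition contract_step :: "'v sgraph \<Rightarrow> 'v sgraph \<Rightarrow> bool" where
  "contract_step G G' \<longleftrightarrow> (\<exists>u v. u \<noteq> v \<and> {u, v} \<in> sedges G \<and>
     G' = \<lparr>sverts = sverts G - {v},
           sedges = {e'. \<exists>e\<in>sedges G. e' = (\<lambda>x. if x = v then u else x) ` e \<and> card e' = 2}\<rparr>)"

definition siso :: "'v sgraph \<Rightarrow> 'w sgraph \<Rightarrow> bool" where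
  "siso J G \<longleftrightarrow> (\<exists>f. bij_betw f (sverts J) (sverts G) \<and>
     (\<forall>x\<in>sverts J. \<forall>y\<in>sverts J. {x, y} \<in> sedges J \<longleftrightarrow> {f x, f y} \<in> sedges G))"

definition minor :: "'w sgraph \<Rightarrow> 'v sgraph \<Rightarrow> bool" where
  "minor J G \<longleftrightarrow> (\<exists>S G'. ssubgraph S G \<and> contract_step\<^sup>*\<^sup>* S G' \<and> siso J G')"

end

theory Submission
  imports Defs
begin

text \<open>Follow the lifts backwards. Every edge t of the lifted graph is carried by a set B t of
  edges of G that is connected in L(G) and reaches both ends of t (for a subgraph edge, just t
  itself), and distinct edges have disjoint sets. Lifting uv, vw replaces the two edges by one
  carried by the union of their sets, which stays connected in L(G) because both sets contain an
  edge at v. Hence, after the isomorphism, the sets B t form a minor model of L(H) in L(G):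
  adjacent edges of H have touching carriers, and contracting each carrier inside a suitable
  subgraph of L(G) produces L(H).\<close>

section \<open>Contracting a simple graph onto a quotient\<close>

definition simple_sgraph :: "'v sgraph \<Rightarrow> bool" where
  "simple_sgraph S \<longleftrightarrow> finite (sverts S) \<and> (\<forall>e\<in>sedges S. e \<subseteq> sverts S \<and> card e = 2)"

definition quotient_sgraph :: "('v \<Rightarrow> 'v) \<Rightarrow> 'v sgraph \<Rightarrow> 'v sgraph" where
  "quotient_sgraph \<phi> S = \<lparr>sverts = \<phi> ` sverts S,
     sedges = {e'. \<exists>e\<in>sedges S. e' = \<phi> ` e \<and> card e' = 2}\<rparr>"

definition fiber_edge :: "'v sgraph \<Rightarrow> ('v \<Rightarrow> 'v) \<Rightarrow> 'v \<Rightarrow> 'v \<Rightarrow> bool" where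
  "fiber_edge S \<phi> a b \<longleftrightarrow> {a, b} \<in> sedges S \<and> \<phi> a = \<phi> b"

definition fiber_retraction :: "'v sgraph \<Rightarrow> ('v \<Rightarrow> 'v) \<Rightarrow> bool" where
  "fiber_retraction S \<phi> \<longleftrightarrow>
     (\<forall>x\<in>sverts S. \<phi> x \<in> sverts S \<and> \<phi> (\<phi> x) = \<phi> x \<and> (fiber_edge S \<phi>)\<^sup>*\<^sup>* x (\<phi> x))"

lemma contract_step_quotient_sgraph:
  assumes "{u, v} \<in> sedges S" "u \<noteq> v" "u \<in> sverts S"
  shows "contract_step S (quotient_sgraph (\<lambda>x. if x = v then u else x) S)"
proof -
  have "(\<lambda>x. if x = v then u else x) ` sverts S = sverts S - {v}"
    using assms(2,3) by auto
  then show ?thesis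
    using assms(1,2) unfolding contract_step_def quotient_sgraph_def by blast
qed

lemma quotient_sgraph_id:
  assumes "simple_sgraph S" "\<forall>x\<in>sverts S. \<phi> x = x"
  shows "quotient_sgraph \<phi> S = S"
proof -
  have "\<phi> ` e = e" if "e \<subseteq> sverts S" for e
    using that assms(2) by (force simp: image_iff)
  then have "\<phi> ` sverts S = sverts S" "{e'. \<exists>e\<in>sedges S. e' = \<phi> ` e \<and> card e' = 2} = sedges S"
    using assms(1) unfolding simple_sgraph_def by force+
  then show ?thesis unfolding quotient_sgraph_def by simp
qed

lemma quotient_sgraph_comp:
  assumes "\<forall>e\<in>sedges S. card e = 2"
  shows "quotient_sgraph \<psi> (quotient_sgraph \<sigma> S) = quotient_sgraph (\<psi> \<circ> \<sigma>) S"
proof -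
  have "card (\<sigma> ` e) = 2" if "e \<in> sedges S" "card (\<psi> ` \<sigma> ` e) = 2" for e
  proof -
    have "card e = 2" using assms that(1) by blast
    then have "finite e" using card.infinite by force
    then show ?thesis
      using card_image_le[of e \<sigma>] card_image_le[of "\<sigma> ` e" \<psi>] that(2) \<open>card e = 2\<close> by simp
  qed
  then have "{e''. \<exists>e'\<in>{e'. \<exists>e\<in>sedges S. e' = \<sigma> ` e \<and> card e' = 2}. e'' = \<psi> ` e' \<and> card e'' = 2}
      = {e''. \<exists>e\<in>sedges S. e'' = (\<psi> \<circ> \<sigma>) ` e \<and> card e'' = 2}"
    by (auto simp: image_comp)
  then show ?thesis unfolding quotient_sgraph_def by (simp add: image_comp)
qed

lemma simple_quotient_sgraph:
  assumes "simple_sgraph S"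
  shows "simple_sgraph (quotient_sgraph \<phi> S)"
  using assms unfolding simple_sgraph_def quotient_sgraph_def by auto

lemma fiber_path_quotient_sgraph:
  assumes "(fiber_edge S \<phi>)\<^sup>*\<^sup>* a b" "\<And>x. \<phi> (\<sigma> x) = \<phi> x"
  shows "(fiber_edge (quotient_sgraph \<sigma> S) \<phi>)\<^sup>*\<^sup>* (\<sigma> a) (\<sigma> b)"
  using assms(1)
proof (induction rule: rtranclp_induct)
  case base
  show ?case by simp
next
  case (step b c)
  show ?case
  proof (cases "\<sigma> b = \<sigma> c")
    case False
    have "{b, c} \<in> sedges S" "\<phi> b = \<phi> c" using step.hyps(2) by (simp_all add: fiber_edge_def)
    moreover have "{\<sigma> b, \<sigma> c} = \<sigma> ` {b, c}" "card {\<sigma> b, \<sigma> c} = 2" using False by simp_all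
    ultimately have "{\<sigma> b, \<sigma> c} \<in> sedges (quotient_sgraph \<sigma> S)"
      unfolding quotient_sgraph_def sgraph.select_convs mem_Collect_eq by blast
    then have "fiber_edge (quotient_sgraph \<sigma> S) \<phi> (\<sigma> b) (\<sigma> c)"
      using \<open>\<phi> b = \<phi> c\<close> assms(2) by (simp add: fiber_edge_def)
    with step.IH show ?thesis by (rule rtranclp.rtrancl_into_rtrancl)
  qed (use step.IH in simp)
qed

lemma fiber_retraction_merge:
  assumes "fiber_retraction S \<phi>" "v \<in> sverts S" "\<phi> v \<noteq> v" "\<phi> u = \<phi> v"
  shows "fiber_retraction (quotient_sgraph (\<lambda>x. if x = v then u else x) S) \<phi>"
proof -
  define \<sigma> where "\<sigma> = (\<lambda>x. if x = v then u else x)"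
  have \<phi>\<sigma>: "\<phi> (\<sigma> x) = \<phi> x" for x using assms(4) by (simp add: \<sigma>_def)
  have retract: "\<phi> y \<in> sverts S" "\<phi> (\<phi> y) = \<phi> y" "(fiber_edge S \<phi>)\<^sup>*\<^sup>* y (\<phi> y)"
    if "y \<in> sverts S" for y
    using assms(1) that unfolding fiber_retraction_def by blast+
  have \<sigma>\<phi>: "\<sigma> (\<phi> y) = \<phi> y" if "y \<in> sverts S" for y
    using retract(2)[OF that] assms(3) by (auto simp: \<sigma>_def)
  have "\<phi> x \<in> \<sigma> ` sverts S \<and> \<phi> (\<phi> x) = \<phi> x \<and> (fiber_edge (quotient_sgraph \<sigma> S) \<phi>)\<^sup>*\<^sup>* x (\<phi> x)"
    if "x \<in> \<sigma> ` sverts S" for x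
  proof -
    from that obtain y where y: "y \<in> sverts S" "x = \<sigma> y" by blast
    then have "\<phi> x = \<phi> y" using \<phi>\<sigma> by simp
    moreover have "\<phi> y \<in> \<sigma> ` sverts S" using \<sigma>\<phi>[OF y(1)] retract(1)[OF y(1)] by (metis image_eqI)
    moreover have "(fiber_edge (quotient_sgraph \<sigma> S) \<phi>)\<^sup>*\<^sup>* x (\<phi> y)"
      using fiber_path_quotient_sgraph[OF retract(3)[OF y(1)] \<phi>\<sigma>] \<sigma>\<phi>[OF y(1)] y(2) by simp
    ultimately show ?thesis using retract(2)[OF y(1)] by simp
  qed
  moreover have "sverts (quotient_sgraph \<sigma> S) = \<sigma> ` sverts S" by (simp add: quotient_sgraph_def)
  ultimately show ?thesis unfolding fiber_retraction_def \<sigma>_def[symmetric] by simp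
qed

text \<open>Induction on the number of vertices: a vertex v not fixed by \<phi> has a neighbour u in
  its fiber, and merging v into u is a contraction that does not change the quotient.\<close>

lemma contract_steps_quotient_sgraph:
  assumes "simple_sgraph S" "fiber_retraction S \<phi>"
  shows "contract_step\<^sup>*\<^sup>* S (quotient_sgraph \<phi> S)"
  using assms
proof (induction "card (sverts S)" arbitrary: S rule: less_induct)
  case less
  show ?case
  proof (cases "\<forall>x\<in>sverts S. \<phi> x = x")
    case True
    then show ?thesis using quotient_sgraph_id[OF less.prems(1)] by simp
  next
    case False
    then obtain v where v: "v \<in> sverts S" "\<phi> v \<noteq> v" by blast
    have "(fiber_edge S \<phi>)\<^sup>*\<^sup>* v (\<phi> v)"
      using less.prems(2) v(1) unfolding fiber_retraction_def by blast
    then obtain u where "fiber_edge S \<phi> v u"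
      using v(2) by (cases rule: converse_rtranclpE) auto
    then have u: "u \<in> sverts S" "u \<noteq> v" and uv: "{u, v} \<in> sedges S" "\<phi> u = \<phi> v"
      using less.prems(1) unfolding simple_sgraph_def fiber_edge_def
      by (auto simp: insert_commute card_2_iff)
    define \<sigma> where "\<sigma> x = (if x = v then u else x)" for x
    define S' where "S' = quotient_sgraph \<sigma> S"
    have contract: "contract_step S S'"
      unfolding S'_def \<sigma>_def using contract_step_quotient_sgraph uv(1) u by metis
    have "\<phi> \<circ> \<sigma> = \<phi>" using uv(2) by (simp add: fun_eq_iff \<sigma>_def)
    then have "quotient_sgraph \<phi> S' = quotient_sgraph \<phi> S"
      using quotient_sgraph_comp[of S \<phi> \<sigma>] less.prems(1)
      unfolding S'_def simple_sgraph_def by simp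
    moreover have "contract_step\<^sup>*\<^sup>* S' (quotient_sgraph \<phi> S')"
    proof (rule less.hyps)
      have "sverts S' = sverts S - {v}" using u by (auto simp: S'_def quotient_sgraph_def \<sigma>_def)
      then show "card (sverts S') < card (sverts S)"
        using card_Diff1_less[of "sverts S" v] v(1) less.prems(1)
        unfolding simple_sgraph_def by simp
      show "simple_sgraph S'" using simple_quotient_sgraph less.prems(1) by (simp add: S'_def)
      show "fiber_retraction S' \<phi>"
        unfolding S'_def \<sigma>_def using fiber_retraction_merge[OF less.prems(2) v uv(2)] .
    qed
    ultimately show ?thesis using contract by (simp add: converse_rtranclp_into_rtranclp)
  qed
qed

section \<open>Minor models\<close>

definition sadj_on :: "'v sgraph \<Rightarrow> 'v set \<Rightarrow> 'v \<Rightarrow> 'v \<Rightarrow> bool" where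
  "sadj_on K A a b \<longleftrightarrow> a \<in> A \<and> b \<in> A \<and> {a, b} \<in> sedges K"

definition sconnected_on :: "'v sgraph \<Rightarrow> 'v set \<Rightarrow> bool" where
  "sconnected_on K A \<longleftrightarrow> (\<forall>x\<in>A. \<forall>y\<in>A. (sadj_on K A)\<^sup>*\<^sup>* x y)"

lemma sconnected_on_Un:
  assumes "sconnected_on K A" "sconnected_on K C" "a \<in> A" "c \<in> C" "{a, c} \<in> sedges K"
  shows "sconnected_on K (A \<union> C)"
proof -
  let ?R = "sadj_on K (A \<union> C)"
  have mono: "(sadj_on K X)\<^sup>*\<^sup>* \<le> ?R\<^sup>*\<^sup>*" if "X \<subseteq> A \<union> C" for X
    using that by (intro rtranclp_mono) (auto simp: sadj_on_def)
  have from_a: "?R\<^sup>*\<^sup>* a x" if "x \<in> A \<union> C" for x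
  proof (cases "x \<in> A")
    case True
    then show ?thesis using assms(1,3) mono[of A] unfolding sconnected_on_def by blast
  next
    case False
    then have "(sadj_on K C)\<^sup>*\<^sup>* c x" using that assms(2,4) unfolding sconnected_on_def by blast
    then have "?R\<^sup>*\<^sup>* c x" using mono[of C] by blast
    moreover have "?R a c" using assms(3-5) by (simp add: sadj_on_def)
    ultimately show ?thesis by (simp add: converse_rtranclp_into_rtranclp)
  qed
  have "symp ?R" by (auto simp: symp_def sadj_on_def insert_commute)
  then have sym: "symp ?R\<^sup>*\<^sup>*" by (rule symp_rtranclp)
  show ?thesis unfolding sconnected_on_def
  proof (intro ballI)
    fix x y assume "x \<in> A \<union> C" "y \<in> A \<union> C"
    then have "?R\<^sup>*\<^sup>* x a" "?R\<^sup>*\<^sup>* a y" using sympD[OF sym] from_a by blast+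
    then show "?R\<^sup>*\<^sup>* x y" by (rule rtranclp_trans)
  qed
qed

locale minor_model =
  fixes J :: "'w sgraph" and K :: "'v sgraph" and B :: "'w \<Rightarrow> 'v set"
  assumes branch_subset: "x \<in> sverts J \<Longrightarrow> B x \<subseteq> sverts K"
    and branch_nonempty: "x \<in> sverts J \<Longrightarrow> B x \<noteq> {}"
    and branch_connected: "x \<in> sverts J \<Longrightarrow> sconnected_on K (B x)"
    and branch_disjoint: "x \<in> sverts J \<Longrightarrow> y \<in> sverts J \<Longrightarrow> x \<noteq> y \<Longrightarrow> B x \<inter> B y = {}"
    and branch_adjacent: "x \<in> sverts J \<Longrightarrow> y \<in> sverts J \<Longrightarrow> {x, y} \<in> sedges J \<Longrightarrow>
      \<exists>a\<in>B x. \<exists>b\<in>B y. {a, b} \<in> sedges K"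
begin

definition branch :: "'v \<Rightarrow> 'w" where
  "branch a = (THE x. x \<in> sverts J \<and> a \<in> B x)"

definition rep :: "'w \<Rightarrow> 'v" where
  "rep x = (SOME a. a \<in> B x)"

text \<open>Only the edges of K inside one branch set or between the branch sets of two adjacent
  vertices of J are kept, so that contracting every branch set to its representative yields
  exactly J.\<close>

definition model_sgraph :: "'v sgraph" where
  "model_sgraph = \<lparr>sverts = \<Union>(B ` sverts J),
     sedges = {{a, b} | a b. {a, b} \<in> sedges K \<and> a \<in> \<Union>(B ` sverts J) \<and> b \<in> \<Union>(B ` sverts J) \<and>
                            (branch a = branch b \<or> {branch a, branch b} \<in> sedges J)}\<rparr>"

lemma branch_eq:
  assumes "x \<in> sverts J" "a \<in> B x"
  shows "branch a = x"
  unfolding branch_def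
proof (rule the_equality)
  show "x \<in> sverts J \<and> a \<in> B x" using assms by blast
  show "y = x" if "y \<in> sverts J \<and> a \<in> B y" for y
    using that assms branch_disjoint by blast
qed

lemma branch_mem:
  assumes "a \<in> \<Union>(B ` sverts J)"
  shows "branch a \<in> sverts J" "a \<in> B (branch a)"
proof -
  from assms obtain x where "x \<in> sverts J" "a \<in> B x" by blast
  with branch_eq show "branch a \<in> sverts J" "a \<in> B (branch a)" by simp_all
qed

lemma rep_mem: "x \<in> sverts J \<Longrightarrow> rep x \<in> B x"
  using branch_nonempty by (simp add: rep_def some_in_eq)

lemma inj_on_rep: "inj_on rep (sverts J)"
proof (rule inj_onI)
  fix x y assume "x \<in> sverts J" "y \<in> sverts J" "rep x = rep y"
  then have "rep x \<in> B x \<inter> B y" using rep_mem[of x] rep_mem[of y] by simp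
  then show "x = y" using branch_disjoint \<open>x \<in> sverts J\<close> \<open>y \<in> sverts J\<close> by blast
qed

lemma model_sgraph_edgeI:
  assumes "{a, b} \<in> sedges K" "x \<in> sverts J" "y \<in> sverts J" "a \<in> B x" "b \<in> B y"
    and "x = y \<or> {x, y} \<in> sedges J"
  shows "{a, b} \<in> sedges model_sgraph"
proof -
  have "branch a = x" "branch b = y" using assms(2-5) branch_eq by auto
  then have "{a, b} \<in> sedges K \<and> a \<in> \<Union>(B ` sverts J) \<and> b \<in> \<Union>(B ` sverts J) \<and>
      (branch a = branch b \<or> {branch a, branch b} \<in> sedges J)"
    using assms by auto
  then show ?thesis unfolding model_sgraph_def by auto
qed

lemma sedges_model_sgraphE:
  assumes "p \<in> sedges model_sgraph"
  obtains a b where "p = {a, b}" "{a, b} \<in> sedges K"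
    "a \<in> \<Union>(B ` sverts J)" "b \<in> \<Union>(B ` sverts J)"
    "branch a = branch b \<or> {branch a, branch b} \<in> sedges J"
  using assms unfolding model_sgraph_def by auto

lemma ssubgraph_model_sgraph: "ssubgraph model_sgraph K"
proof -
  have "sverts model_sgraph \<subseteq> sverts K"
    using branch_subset unfolding model_sgraph_def by auto
  moreover have "p \<in> sedges K \<and> p \<subseteq> sverts model_sgraph" if "p \<in> sedges model_sgraph" for p
    using that by (elim sedges_model_sgraphE) (simp add: model_sgraph_def)
  ultimately show ?thesis unfolding ssubgraph_def by blast
qed

lemma simple_model_sgraph:
  assumes "simple_sgraph K"
  shows "simple_sgraph model_sgraph"
  using assms ssubgraph_model_sgraph finite_subset
  unfolding simple_sgraph_def ssubgraph_def by (meson subsetD)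

lemma fiber_path_rep_branch:
  assumes "a \<in> sverts model_sgraph"
  shows "(fiber_edge model_sgraph (rep \<circ> branch))\<^sup>*\<^sup>* a (rep (branch a))"
proof -
  let ?x = "branch a"
  have x: "?x \<in> sverts J" "a \<in> B ?x"
    using assms branch_mem unfolding model_sgraph_def by auto
  have "fiber_edge model_sgraph (rep \<circ> branch) b c" if "sadj_on K (B ?x) b c" for b c
  proof -
    have "b \<in> B ?x" "c \<in> B ?x" "{b, c} \<in> sedges K" using that by (auto simp: sadj_on_def)
    then show ?thesis
      using model_sgraph_edgeI[OF _ x(1) x(1)] branch_eq[OF x(1)] by (simp add: fiber_edge_def)
  qed
  then have "sadj_on K (B ?x) \<le> fiber_edge model_sgraph (rep \<circ> branch)" by blast
  moreover have "(sadj_on K (B ?x))\<^sup>*\<^sup>* a (rep ?x)"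
    using branch_connected[OF x(1)] x rep_mem unfolding sconnected_on_def by blast
  ultimately show ?thesis using rtranclp_mono by blast
qed

lemma fiber_retraction_rep_branch: "fiber_retraction model_sgraph (rep \<circ> branch)"
  unfolding fiber_retraction_def
proof
  fix a assume a: "a \<in> sverts model_sgraph"
  then have x: "branch a \<in> sverts J" using branch_mem by (simp add: model_sgraph_def)
  then have "rep (branch a) \<in> sverts model_sgraph" using rep_mem unfolding model_sgraph_def by auto
  moreover have "branch (rep (branch a)) = branch a" using branch_eq[OF x rep_mem[OF x]] .
  ultimately show "(rep \<circ> branch) a \<in> sverts model_sgraph \<and>
      (rep \<circ> branch) ((rep \<circ> branch) a) = (rep \<circ> branch) a \<and>
      (fiber_edge model_sgraph (rep \<circ> branch))\<^sup>*\<^sup>* a ((rep \<circ> branch) a)"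
    using fiber_path_rep_branch[OF a] by simp
qed

lemma sverts_quotient_model_sgraph:
  "sverts (quotient_sgraph (rep \<circ> branch) model_sgraph) = rep ` sverts J"
proof -
  have "(rep \<circ> branch) ` \<Union>(B ` sverts J) \<subseteq> rep ` sverts J"
    using branch_mem by auto
  moreover have "rep x \<in> (rep \<circ> branch) ` \<Union>(B ` sverts J)" if "x \<in> sverts J" for x
    using that rep_mem[OF that] branch_eq[OF that rep_mem[OF that]] by force
  ultimately show ?thesis unfolding quotient_sgraph_def model_sgraph_def by auto
qed

lemma sedges_quotient_model_sgraph_iff:
  assumes "\<forall>e\<in>sedges J. card e = 2" "x \<in> sverts J" "y \<in> sverts J"
  shows "{rep x, rep y} \<in> sedges (quotient_sgraph (rep \<circ> branch) model_sgraph) \<longleftrightarrow> {x, y} \<in> sedges J"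
    (is "?lhs \<longleftrightarrow> ?rhs")
proof
  assume ?lhs
  then obtain p where p: "p \<in> sedges model_sgraph" "{rep x, rep y} = (rep \<circ> branch) ` p"
    and card: "card {rep x, rep y} = 2"
    unfolding quotient_sgraph_def by auto
  from p(1) obtain a b where "p = {a, b}" and ab: "a \<in> \<Union>(B ` sverts J)" "b \<in> \<Union>(B ` sverts J)"
      "branch a = branch b \<or> {branch a, branch b} \<in> sedges J"
    by (rule sedges_model_sgraphE)
  then have "rep ` {x, y} = rep ` {branch a, branch b}" using p(2) by simp
  have "{x, y} = {branch a, branch b}"
  proof (rule inj_on_image_eq_iff[OF inj_on_rep, THEN iffD1])
    show "{x, y} \<subseteq> sverts J" "{branch a, branch b} \<subseteq> sverts J"
      using assms(2,3) branch_mem[OF ab(1)] branch_mem[OF ab(2)] by auto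
  qed fact
  moreover have "x \<noteq> y" using card by auto
  ultimately show ?rhs using ab(3) by auto
next
  assume ?rhs
  then have "card {x, y} = 2" using assms(1) by blast
  then have "x \<noteq> y" by (auto simp: card_2_iff doubleton_eq_iff)
  then have "rep x \<noteq> rep y" using inj_onD[OF inj_on_rep _ assms(2,3)] by blast
  obtain a b where ab: "a \<in> B x" "b \<in> B y" "{a, b} \<in> sedges K"
    using branch_adjacent[OF assms(2,3) \<open>?rhs\<close>] by blast
  then have branch_ab: "branch a = x" "branch b = y" using assms(2,3) branch_eq by auto
  have "{a, b} \<in> sedges model_sgraph"
    using model_sgraph_edgeI[OF ab(3) assms(2,3) ab(1,2)] \<open>?rhs\<close> by blast
  moreover have "{rep x, rep y} = (rep \<circ> branch) ` {a, b}" using branch_ab by simp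
  moreover have "card {rep x, rep y} = 2" using \<open>rep x \<noteq> rep y\<close> by simp
  ultimately show ?lhs
    unfolding quotient_sgraph_def sgraph.select_convs mem_Collect_eq by blast
qed

theorem minor:
  assumes "simple_sgraph K" "\<forall>e\<in>sedges J. card e = 2"
  shows "minor J K"
proof -
  have "contract_step\<^sup>*\<^sup>* model_sgraph (quotient_sgraph (rep \<circ> branch) model_sgraph)"
    using contract_steps_quotient_sgraph simple_model_sgraph[OF assms(1)]
      fiber_retraction_rep_branch by blast
  moreover have "siso J (quotient_sgraph (rep \<circ> branch) model_sgraph)"
    unfolding siso_def sverts_quotient_model_sgraph
    using inj_on_imp_bij_betw[OF inj_on_rep] sedges_quotient_model_sgraph_iff[OF assms(2)] by auto
  ultimately show ?thesis
    unfolding minor_def using ssubgraph_model_sgraph by blast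
qed

end

section \<open>Edge models of immersions in line graphs\<close>

lemma in_sedges_line_graph_iff:
  assumes "e \<in> edges G" "f \<in> edges G"
  shows "{e, f} \<in> sedges (line_graph G) \<longleftrightarrow> e \<noteq> f \<and> ends G e \<inter> ends G f \<noteq> {}"
  using assms unfolding line_graph_def by (auto simp: doubleton_eq_iff)

lemma card_sedges_line_graph: "p \<in> sedges (line_graph G) \<Longrightarrow> card p = 2"
  unfolding line_graph_def by auto

lemma simple_line_graph: "finite (edges G) \<Longrightarrow> simple_sgraph (line_graph G)"
  unfolding simple_sgraph_def line_graph_def by auto

text \<open>T lives on the vertices of G; for an edge t created by lifting, B t contains the trail
  of G that t replaces.\<close>

definition edge_model :: "('v, 'e) mgraph \<Rightarrow> ('v, 'f) mgraph \<Rightarrow> ('f \<Rightarrow> 'e set) \<Rightarrow> bool" where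
  "edge_model G T B \<longleftrightarrow>
     (\<forall>t\<in>edges T. B t \<subseteq> edges G \<and> B t \<noteq> {} \<and> sconnected_on (line_graph G) (B t) \<and>
                   ends T t \<subseteq> \<Union>(ends G ` B t)) \<and>
     (\<forall>t\<in>edges T. \<forall>t'\<in>edges T. t \<noteq> t' \<longrightarrow> B t \<inter> B t' = {})"

lemma edge_modelD:
  assumes "edge_model G T B" "t \<in> edges T"
  shows "B t \<subseteq> edges G" "B t \<noteq> {}" "sconnected_on (line_graph G) (B t)"
    and "ends T t \<subseteq> \<Union>(ends G ` B t)"
  using assms unfolding edge_model_def by blast+

lemma edge_model_disjoint:
  assumes "edge_model G T B" "t \<in> edges T" "t' \<in> edges T" "t \<noteq> t'"
  shows "B t \<inter> B t' = {}"
  using assms unfolding edge_model_def by blast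

lemma edge_model_touching:
  assumes "edge_model G T B" "t \<in> edges T" "t' \<in> edges T" "t \<noteq> t'"
    and "c \<in> ends T t" "c \<in> ends T t'"
  shows "\<exists>a\<in>B t. \<exists>b\<in>B t'. {a, b} \<in> sedges (line_graph G)"
proof -
  obtain a b where ab: "a \<in> B t" "b \<in> B t'" "c \<in> ends G a" "c \<in> ends G b"
    using edge_modelD(4)[OF assms(1,2)] edge_modelD(4)[OF assms(1,3)] assms(5,6) by blast
  moreover have "a \<noteq> b" using ab(1,2) edge_model_disjoint[OF assms(1-4)] by blast
  moreover have "a \<in> edges G" "b \<in> edges G"
    using ab(1,2) edge_modelD(1)[OF assms(1,2)] edge_modelD(1)[OF assms(1,3)] by blast+
  ultimately show ?thesis using in_sedges_line_graph_iff[of a G b] by blast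
qed

lemma msubgraph_edge_model: "msubgraph T G \<Longrightarrow> edge_model G T (\<lambda>t. {t})"
  unfolding edge_model_def msubgraph_def sconnected_on_def by auto

lemma edge_model_lift:
  assumes "edge_model G T B" "e1 \<in> edges T" "e2 \<in> edges T" "e1 \<noteq> e2"
    and "v \<in> ends T e1" "v \<in> ends T e2" "u \<in> ends T e1" "w \<in> ends T e2"
  shows "edge_model G (T\<lparr>edges := edges T - {e2}, ends := (ends T)(e1 := {u, w})\<rparr>)
    (B(e1 := B e1 \<union> B e2))" (is "edge_model G ?T' ?B'")
proof -
  obtain a b where ab: "a \<in> B e1" "b \<in> B e2" "{a, b} \<in> sedges (line_graph G)"
    using edge_model_touching[OF assms(1-6)] by blast
  have merged_connected: "sconnected_on (line_graph G) (B e1 \<union> B e2)"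
    using sconnected_on_Un[OF edge_modelD(3)[OF assms(1,2)] edge_modelD(3)[OF assms(1,3)] ab] .
  have merged_cover: "{u, w} \<subseteq> \<Union>(ends G ` (B e1 \<union> B e2))"
    using edge_modelD(4)[OF assms(1,2)] edge_modelD(4)[OF assms(1,3)] assms(7,8) by blast
  have "?B' t \<subseteq> edges G \<and> ?B' t \<noteq> {} \<and> sconnected_on (line_graph G) (?B' t) \<and>
      ends ?T' t \<subseteq> \<Union>(ends G ` ?B' t)" if "t \<in> edges ?T'" for t
  proof (cases "t = e1")
    case True
    then show ?thesis using edge_modelD[OF assms(1,2)] edge_modelD[OF assms(1,3)]
        merged_connected merged_cover by simp
  next
    case False
    moreover have "t \<in> edges T" using that by simp
    ultimately show ?thesis using edge_modelD[OF assms(1)] by simp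
  qed
  moreover have "?B' t \<inter> ?B' t' = {}" if "t \<in> edges ?T'" "t' \<in> edges ?T'" "t \<noteq> t'" for t t'
  proof -
    have t: "t \<in> edges T" "t \<noteq> e2" "t' \<in> edges T" "t' \<noteq> e2" using that by simp_all
    note disjoint = edge_model_disjoint[OF assms(1)]
    consider "t = e1" | "t' = e1" | "t \<noteq> e1" "t' \<noteq> e1" by blast
    then show ?thesis
    proof cases
      case 1
      then show ?thesis using disjoint[OF assms(2) t(3)] disjoint[OF assms(3) t(3)] t(4) that(3)
        by auto
    next
      case 2
      then show ?thesis using disjoint[OF t(1) assms(2)] disjoint[OF t(1) assms(3)] t(2) that(3)
        by auto
    next
      case 3
      then show ?thesis using disjoint[OF t(1,3) that(3)] by simp
    qed
  qed
  ultimately show ?thesis unfolding edge_model_def by blast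
qed

lemma lift_step_edge_model:
  assumes "lift_step T T'" "edge_model G T B"
  shows "\<exists>B'. edge_model G T' B'"
proof -
  obtain e1 e2 u v w where e: "e1 \<in> edges T" "e2 \<in> edges T" "e1 \<noteq> e2"
    and ends: "ends T e1 = {u, v}" "ends T e2 = {v, w}"
    and T': "if u = w then T' = T\<lparr>edges := edges T - {e1, e2}\<rparr>
             else T' = T\<lparr>edges := edges T - {e2}, ends := (ends T)(e1 := {u, w})\<rparr>"
    using assms(1) unfolding lift_step_def by blast
  show ?thesis
  proof (cases "u = w")
    case True
    then have "edges T' \<subseteq> edges T" "ends T' = ends T" using T' by auto
    then have "edge_model G T' B"
      using assms(2) unfolding edge_model_def \<open>ends T' = ends T\<close> by blast
    then show ?thesis by blast
  next
    case False
    then show ?thesis using T' edge_model_lift[OF assms(2) e, of v u w] ends by auto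
  qed
qed

lemma lift_steps_edge_model:
  assumes "lift_step\<^sup>*\<^sup>* T T'" "edge_model G T B"
  shows "\<exists>B'. edge_model G T' B'"
  using assms(1)
proof (induction rule: rtranclp_induct)
  case base
  show ?case using assms(2) by blast
next
  case (step T' T'')
  then show ?case using lift_step_edge_model by blast
qed

lemma edge_model_minor_model:
  assumes "edge_model G T B"
  shows "minor_model (line_graph T) (line_graph G) B"
proof
  fix t t' assume "t \<in> sverts (line_graph T)" "t' \<in> sverts (line_graph T)"
  then have t: "t \<in> edges T" "t' \<in> edges T" by (simp_all add: line_graph_def)
  show "B t \<subseteq> sverts (line_graph G)"
    using edge_modelD(1)[OF assms t(1)] by (simp add: line_graph_def)
  show "B t \<noteq> {}" "sconnected_on (line_graph G) (B t)"
    using edge_modelD(2,3)[OF assms t(1)] by blast+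
  show "B t \<inter> B t' = {}" if "t \<noteq> t'"
    using edge_model_disjoint[OF assms t that] .
  assume "{t, t'} \<in> sedges (line_graph T)"
  then obtain c where "t \<noteq> t'" "c \<in> ends T t" "c \<in> ends T t'"
    using in_sedges_line_graph_iff[OF t] by blast
  then show "\<exists>a\<in>B t. \<exists>b\<in>B t'. {a, b} \<in> sedges (line_graph G)"
    using edge_model_touching[OF assms t] by blast
qed

lemma minor_model_miso:
  assumes "miso H T" "minor_model (line_graph T) K B"
  shows "\<exists>B'. minor_model (line_graph H) K B'"
proof -
  interpret minor_model "line_graph T" K B by fact
  obtain f g where g: "bij_betw g (edges H) (edges T)"
    and ends: "\<forall>e\<in>edges H. ends T (g e) = f ` ends H e"
    using assms(1) unfolding miso_def by blast
  have "minor_model (line_graph H) K (B \<circ> g)"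
  proof
    fix x y assume "x \<in> sverts (line_graph H)" "y \<in> sverts (line_graph H)"
    then have xy: "x \<in> edges H" "y \<in> edges H" by (simp_all add: line_graph_def)
    then have gxy_edges: "g x \<in> edges T" "g y \<in> edges T" using g bij_betwE by blast+
    then have gxy: "g x \<in> sverts (line_graph T)" "g y \<in> sverts (line_graph T)"
      by (simp_all add: line_graph_def)
    show "(B \<circ> g) x \<subseteq> sverts K" "(B \<circ> g) x \<noteq> {}" "sconnected_on K ((B \<circ> g) x)"
      using branch_subset branch_nonempty branch_connected gxy(1) by simp_all
    show "(B \<circ> g) x \<inter> (B \<circ> g) y = {}" if "x \<noteq> y"
      using branch_disjoint[OF gxy] inj_on_contraD[OF bij_betw_imp_inj_on[OF g] that xy] by simp
    assume "{x, y} \<in> sedges (line_graph H)"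
    then have "x \<noteq> y" "ends H x \<inter> ends H y \<noteq> {}"
      using in_sedges_line_graph_iff[OF xy] by simp_all
    then have "g x \<noteq> g y" "ends T (g x) \<inter> ends T (g y) \<noteq> {}"
      using xy ends inj_on_contraD[OF bij_betw_imp_inj_on[OF g] _ xy] by auto
    then have "{g x, g y} \<in> sedges (line_graph T)"
      using in_sedges_line_graph_iff[OF gxy_edges] by blast
    then show "\<exists>a\<in>(B \<circ> g) x. \<exists>b\<in>(B \<circ> g) y. {a, b} \<in> sedges K"
      using branch_adjacent[OF gxy] by simp
  qed
  then show ?thesis by blast
qed

theorem proposition9p1:
  fixes G :: "('v, 'e) mgraph" and H :: "('w, 'f) mgraph"
  assumes "mgraph G" and "mgraph H"
    and "mconnected G" and "mconnected H"
    and "immersion H G"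
  shows "minor (line_graph H) (line_graph G)"
proof -
  obtain S T where "msubgraph S G" "lift_step\<^sup>*\<^sup>* S T" "miso H T"
    using assms(5) unfolding immersion_def by blast
  then obtain B where "edge_model G T B"
    using lift_steps_edge_model msubgraph_edge_model by blast
  then obtain B' where "minor_model (line_graph H) (line_graph G) B'"
    using minor_model_miso[OF \<open>miso H T\<close>] edge_model_minor_model by blast
  moreover have "simple_sgraph (line_graph G)"
    using assms(1) simple_line_graph unfolding mgraph_def by blast
  ultimately show ?thesis
    using minor_model.minor card_sedges_line_graph by blast
qed

end
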